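(* Let $\delta\in(0,\tfrac14]$. Then for all sufficiently large $n$ (the threshold may depend on $\delta$) the following holds for every conjugacy class $C$ of $S_n$ with $f(C)\le\delta n$: (1) For every integer $k$ with $\frac12 n<k\le\frac58 n$, \begin{equation*} \sum_{\substack{C_1\in [S_k],\ C_2\in[S_{n-k}]\\C=C_1C_2}}|C_1||C_2|\leq\exp\left(-\frac{3}{50}n\right)|C|. \end{equation*} (2) \begin{equation*} \sum_{\substack{C_1\in [S_{n-1}],\ C_2\in[S_1]\\C=C_1C_2}}|C_1|\leq\delta |C|\qquad\text{and}\qquad\sum_{\substack{C_1\in [S_{n-2}],\ C_2\in [S_2]\\C=C_1C_2}}|C_1|\leq 2\delta^2|C|. \end{equation*}
   Context: $[S_m]$ denotes the set of conjugacy classes of $S_m$. For a conjugacy class $C$ of $S_n$, $f(C)$ denotes the number of fixed points of a permutation in $C$. For $C\in[S_n]$, $C_1\in[S_k]$, $C_2\in[S_{n-k}]$, let $m_l,s_l,t_l$ be the number of $l$-cycles of permutations in $C,C_1,C_2$ respectively; one writes $C=C_1C_2$ iff $m_l=s_l+t_l$ for all $l=1,\dots,n$. *)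

theory Defs
  imports Complex_Main "HOL-Combinatorics.Permutations" "HOL-Combinatorics.Orbits"
begin

definition conj_class :: "nat \<Rightarrow> (nat \<Rightarrow> nat) \<Rightarrow> (nat \<Rightarrow> nat) set" where
  "conj_class n p = (\<lambda>r. r \<circ> p \<circ> inv r) ` {r. r permutes {..<n}}"

definition conj_classes :: "nat \<Rightarrow> (nat \<Rightarrow> nat) set set" where
  "conj_classes n = conj_class n ` {p. p permutes {..<n}}"

text \<open>Number of l-cycles of a permutation p of {..<n} (cycles = orbits, fixed points count as 1-cycles).\<close>
definition num_cycles :: "nat \<Rightarrow> (nat \<Rightarrow> nat) \<Rightarrow> nat \<Rightarrow> nat" where
  "num_cycles n p l = card {Orb. \<exists>x<n. Orb = orbit p x \<and> card Orb = l}"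

definition class_cycles :: "nat \<Rightarrow> (nat \<Rightarrow> nat) set \<Rightarrow> nat \<Rightarrow> nat" where
  "class_cycles n C l = num_cycles n (SOME p. p \<in> C) l"

definition fixpts :: "nat \<Rightarrow> (nat \<Rightarrow> nat) set \<Rightarrow> nat" where
  "fixpts n C = class_cycles n C 1"

text \<open>C = C1 C2 for C in [S_n], C1 in [S_k], C2 in [S_(n-k)].\<close>
definition class_prod_eq :: "nat \<Rightarrow> nat \<Rightarrow> (nat \<Rightarrow> nat) set \<Rightarrow> (nat \<Rightarrow> nat) set \<Rightarrow> (nat \<Rightarrow> nat) set \<Rightarrow> bool" where
  "class_prod_eq n k C C1 C2 \<longleftrightarrow>
     (\<forall>l\<in>{1..n}. class_cycles n C l = class_cycles k C1 l + class_cycles (n - k) C2 l)"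

end

theory Submission
  imports Defs "HOL-Real_Asymp.Real_Asymp" "HOL-Analysis.Harmonic_Numbers"
begin

text \<open>
  All three bounds come from double counting pairs (p, S) with p \<in> C and S a p-invariant
  k-subset of {..<n}. The elements of C fixing {..<k} setwise are exactly the joins of a
  permutation of {..<k} and one of {k..<n} whose cycle types add up to that of C, so
  \<Sum> |C1| |C2| is at most their number, which is |C| times the average number of invariant
  k-sets of an element of C, divided by (n choose k). An invariant set is a union of cycles; if
  f(C) \<le> n/4 there are at most 5n/8 cycles, hence at most 2^(5n/8) invariant sets, whereas
  (n choose k) \<ge> 2^(3n/4)/(n+1) for n/2 < k \<le> 5n/8. For k = n-1, resp. n-2, an invariant set
  is the complement of a fixed point, resp. of two fixed points or of a 2-cycle.
\<close>

definition perm_cycles :: "('a \<Rightarrow> 'a) \<Rightarrow> 'a set \<Rightarrow> 'a set set" where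
  "perm_cycles p A = orbit p ` A"

definition cycle_count :: "('a \<Rightarrow> 'a) \<Rightarrow> 'a set \<Rightarrow> nat \<Rightarrow> nat" where
  "cycle_count p A l = card {Y \<in> perm_cycles p A. card Y = l}"

lemma num_cycles_eq_cycle_count: "num_cycles n p l = cycle_count p {..<n} l"
  unfolding num_cycles_def cycle_count_def perm_cycles_def
  by (rule arg_cong[where f=card]) auto

lemma finite_perm_cycles: "finite A \<Longrightarrow> finite (perm_cycles p A)"
  by (simp add: perm_cycles_def)

lemma funpow_intertwining:
  assumes "p ` A \<subseteq> A" "\<forall>x\<in>A. r (p x) = q (r x)" "x \<in> A"
  shows "(q ^^ m) (r x) = r ((p ^^ m) x) \<and> (p ^^ m) x \<in> A"
  using assms by (induction m) auto

lemma orbit_intertwining: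
  assumes "p ` A \<subseteq> A" "\<forall>x\<in>A. r (p x) = q (r x)" "x \<in> A"
  shows "orbit q (r x) = r ` orbit p x"
  using funpow_intertwining[OF assms] unfolding orbit_altdef by auto

lemma orbit_subset_if_image_subset:
  assumes "p ` A \<subseteq> A" "x \<in> A"
  shows "orbit p x \<subseteq> A"
proof
  fix y assume "y \<in> orbit p x" then show "y \<in> A" by induct (use assms in auto)
qed

lemma cycle_count_intertwining:
  assumes "bij_betw r A B" "p ` A \<subseteq> A" "\<forall>x\<in>A. r (p x) = q (r x)"
  shows "cycle_count p A l = cycle_count q B l"
proof -
  have B: "B = r ` A" and inj: "inj_on r A" using assms(1) by (simp_all add: bij_betw_def)
  have sub: "\<And>Y. Y \<in> perm_cycles p A \<Longrightarrow> Y \<subseteq> A"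
    unfolding perm_cycles_def using orbit_subset_if_image_subset[OF assms(2)] by auto
  have card_r: "card (r ` Y) = card Y" if "Y \<in> perm_cycles p A" for Y
    using card_image[OF inj_on_subset[OF inj sub[OF that]]] .
  have "perm_cycles q B = (\<lambda>Y. r ` Y) ` perm_cycles p A"
    unfolding perm_cycles_def B image_image using orbit_intertwining[OF assms(2,3)] by auto
  hence "{Y \<in> perm_cycles q B. card Y = l} = (\<lambda>Y. r ` Y) ` {Y \<in> perm_cycles p A. card Y = l}"
    using card_r by auto
  moreover have "inj_on (\<lambda>Y. r ` Y) {Y \<in> perm_cycles p A. card Y = l}"
    using sub inj by (intro inj_onI) (metis (no_types, lifting) inj_on_image_eq_iff mem_Collect_eq)
  ultimately show ?thesis unfolding cycle_count_def by (simp add: card_image)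
qed

lemma self_in_orbit_if_permutes:
  assumes "p permutes A" "finite A" shows "x \<in> orbit p x"
  using assms by (intro permutation_self_in_orbit) (auto simp: permutation_permutes)

lemma orbit_eq_if_in_orbit:
  assumes "p permutes A" "finite A" "y \<in> orbit p x" shows "orbit p y = orbit p x"
  using orbit_cyclic_eq3[OF cyclic_on_orbit[OF assms(1,2)] assms(3)] .

lemma orbit_enumeration:
  assumes "a \<in> orbit p a"
  shows "bij_betw (\<lambda>i. (p ^^ i) a) {..<card (orbit p a)} (orbit p a)"
    and "(p ^^ card (orbit p a)) a = a"
proof -
  let ?m = "funpow_dist1 p a a"
  have e: "orbit p a = (\<lambda>n. (p ^^ n) a) ` {0..<?m}" by (rule orbit_conv_funpow_dist1[OF assms])
  have i: "inj_on (\<lambda>n. (p ^^ n) a) {0..<?m}" by (rule inj_on_funpow_dist1[OF assms])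
  have c: "card (orbit p a) = ?m" using e i by (simp add: card_image)
  show "bij_betw (\<lambda>i. (p ^^ i) a) {..<card (orbit p a)} (orbit p a)"
    using e i c by (simp add: bij_betw_def atLeast0LessThan)
  show "(p ^^ card (orbit p a)) a = a" using c funpow_dist1_prop[OF assms] by simp
qed

lemma orbit_intertwiner_exists:
  assumes "a \<in> orbit p a" "b \<in> orbit q b" "card (orbit q b) = card (orbit p a)"
  shows "\<exists>r. bij_betw r (orbit p a) (orbit q b) \<and> (\<forall>x\<in>orbit p a. r (p x) = q (r x))"
proof -
  define l where "l = card (orbit p a)"
  define e where "e = (\<lambda>i. (p ^^ i) a)"
  define e' where "e' = (\<lambda>i. (q ^^ i) b)"
  have e: "bij_betw e {..<l} (orbit p a)" "e l = e 0"
    using orbit_enumeration[OF assms(1)] unfolding e_def l_def by simp_all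
  have e': "bij_betw e' {..<l} (orbit q b)" "e' l = e' 0"
    using orbit_enumeration[OF assms(2)] unfolding e'_def l_def assms(3) by simp_all
  define r where "r = e' \<circ> the_inv_into {..<l} e"
  have bij: "bij_betw r (orbit p a) (orbit q b)"
    unfolding r_def by (rule bij_betw_trans[OF bij_betw_the_inv_into[OF e(1)] e'(1)])
  have r_e: "r (e i) = e' i" if "i < l" for i
    using the_inv_into_f_f[OF bij_betw_imp_inj_on[OF e(1)]] that by (simp add: r_def)
  have "r (p x) = q (r x)" if "x \<in> orbit p a" for x
  proof -
    from that obtain i where i: "i < l" "x = e i"
      using bij_betw_imp_surj_on[OF e(1)] by (metis imageE lessThan_iff)
    have "p x = e (Suc i)" "q (e' i) = e' (Suc i)" by (simp_all add: i e_def e'_def)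
    moreover have "r (e (Suc i)) = e' (Suc i)"
    proof (cases "Suc i < l")
      case True thus ?thesis by (rule r_e)
    next
      case False hence "Suc i = l" using i(1) by simp
      thus ?thesis using r_e[of 0] e(2) e'(2) i(1) by simp
    qed
    ultimately show ?thesis using r_e i by simp
  qed
  with bij show ?thesis by blast
qed

lemma cycle_count_orbit_card_pos:
  assumes "finite A" "a \<in> A"
  shows "cycle_count p A (card (orbit p a)) > 0"
proof -
  have "orbit p a \<in> {Y \<in> perm_cycles p A. card Y = card (orbit p a)}"
    using assms(2) by (auto simp: perm_cycles_def)
  moreover have "finite {Y \<in> perm_cycles p A. card Y = card (orbit p a)}"
    using assms(1) by (simp add: finite_perm_cycles)
  ultimately show ?thesis unfolding cycle_count_def by (auto simp: card_gt_0_iff)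
qed

lemma cycle_count_remove_orbit:
  assumes "p permutes A" "finite A" "a \<in> A"
  shows "cycle_count p A m = cycle_count (perm_restrict p (A - orbit p a)) (A - orbit p a) m
           + (if m = card (orbit p a) then 1 else 0)"
proof -
  let ?Y = "orbit p a" let ?p = "perm_restrict p (A - ?Y)" let ?X = "perm_cycles ?p (A - ?Y)"
  have pp: "?p permutes (A - ?Y)"
    by (rule perm_restrict_diff_cyclic[OF assms(1) cyclic_on_orbit[OF assms(1,2)]])
  have eqo: "orbit ?p x = orbit p x" if "x \<in> A - ?Y" for x
  proof -
    have "?p \<in> (A - ?Y) \<rightarrow> (A - ?Y)" using permutes_image[OF pp] by auto
    from orbit_cong0[OF that this, of p] show ?thesis by (simp add: perm_restrict_simps)
  qed
  have "orbit p x = ?Y" if "x \<in> ?Y" for x using orbit_eq_if_in_orbit[OF assms(1,2) that] .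
  hence "orbit p ` ?Y = {?Y}" using self_in_orbit_if_permutes[OF assms(1,2), of a] by blast
  moreover have "orbit p ` (A - ?Y) = orbit ?p ` (A - ?Y)" using eqo by (intro image_cong) auto
  moreover have "A = ?Y \<union> (A - ?Y)" using permutes_orbit_subset[OF assms(1,3)] by blast
  ultimately have ins: "perm_cycles p A = insert ?Y ?X"
    unfolding perm_cycles_def by (metis image_Un insert_is_Un)
  have notin: "?Y \<notin> ?X"
    unfolding perm_cycles_def using eqo self_in_orbit_if_permutes[OF assms(1,2)] by auto
  have "finite ?X" using assms(2) by (simp add: finite_perm_cycles)
  moreover have "{Y \<in> insert ?Y ?X. card Y = m}
      = (if m = card ?Y then insert ?Y {Y \<in> ?X. card Y = m} else {Y \<in> ?X. card Y = m})"
    by auto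
  ultimately show ?thesis unfolding cycle_count_def ins using notin by simp
qed

lemma intertwiner_Un:
  assumes "bij_betw r1 Y Y'" "\<forall>x\<in>Y. r1 (p x) = q (r1 x)" "p ` Y \<subseteq> Y"
    and "bij_betw r2 Z Z'" "\<forall>x\<in>Z. r2 (p x) = q (r2 x)" "p ` Z \<subseteq> Z"
    and "Y \<inter> Z = {}" "Y' \<inter> Z' = {}"
  shows "\<exists>r. bij_betw r (Y \<union> Z) (Y' \<union> Z') \<and> (\<forall>x\<in>Y \<union> Z. r (p x) = q (r x))"
proof -
  define r where "r x = (if x \<in> Y then r1 x else r2 x)" for x
  have "bij_betw r Y Y'" using assms(1) by (rule bij_betw_cong[THEN iffD1, rotated]) (simp add: r_def)
  moreover have "bij_betw r Z Z'"
    using assms(4) by (rule bij_betw_cong[THEN iffD1, rotated]) (use assms(7) in \<open>auto simp: r_def\<close>)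
  ultimately have "bij_betw r (Y \<union> Z) (Y' \<union> Z')" using assms(8) by (rule bij_betw_combine)
  moreover have "r (p x) = q (r x)" if "x \<in> Y \<union> Z" for x
    using that assms(2,3,5,6,7) by (auto simp: r_def)
  ultimately show ?thesis by blast
qed

lemma intertwiner_if_cycle_count_eq:
  assumes "finite A" "p permutes A" "finite B" "q permutes B" "\<forall>l. cycle_count p A l = cycle_count q B l"
  shows "\<exists>r. bij_betw r A B \<and> (\<forall>x\<in>A. r (p x) = q (r x))"
using assms
proof (induction "card A" arbitrary: A B p q rule: less_induct)
  case less
  show ?case
  proof (cases "A = {}")
    case True
    hence "cycle_count q B l = 0" for l using less.prems(5) by (simp add: cycle_count_def perm_cycles_def)
    hence "B = {}" using cycle_count_orbit_card_pos[OF less.prems(3)] by (metis equals0I less_irrefl)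
    thus ?thesis using True by (simp add: bij_betw_def)
  next
    case False
    then obtain a where a: "a \<in> A" by auto
    let ?Y = "orbit p a"
    have "cycle_count q B (card ?Y) > 0"
      using cycle_count_orbit_card_pos[OF less.prems(1) a, of p] less.prems(5) by simp
    then obtain b where b: "b \<in> B" "card (orbit q b) = card ?Y"
      unfolding cycle_count_def perm_cycles_def by (auto simp: card_gt_0_iff)
    let ?Y' = "orbit q b"
    let ?p = "perm_restrict p (A - ?Y)" let ?q = "perm_restrict q (B - ?Y')"
    have pp: "?p permutes (A - ?Y)"
      by (rule perm_restrict_diff_cyclic[OF less.prems(2) cyclic_on_orbit[OF less.prems(2,1)]])
    have qq: "?q permutes (B - ?Y')"
      by (rule perm_restrict_diff_cyclic[OF less.prems(4) cyclic_on_orbit[OF less.prems(4,3)]])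
    have aY: "a \<in> ?Y" by (rule self_in_orbit_if_permutes[OF less.prems(2,1)])
    have bY': "b \<in> ?Y'" by (rule self_in_orbit_if_permutes[OF less.prems(4,3)])
    have smaller: "card (A - ?Y) < card A"
      using aY a less.prems(1) by (intro psubset_card_mono) auto
    have "\<forall>m. cycle_count ?p (A - ?Y) m = cycle_count ?q (B - ?Y') m"
      using cycle_count_remove_orbit[OF less.prems(2,1) a] cycle_count_remove_orbit[OF less.prems(4,3) b(1)]
        less.prems(5) b(2) by simp
    then obtain r' where r': "bij_betw r' (A - ?Y) (B - ?Y')" "\<forall>x\<in>A - ?Y. r' (?p x) = ?q (r' x)"
      using less.hyps[OF smaller _ pp _ qq] less.prems(1,3) by blast
    have "\<forall>x\<in>A - ?Y. r' (p x) = q (r' x)"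
    proof
      fix x assume x: "x \<in> A - ?Y"
      hence "r' x \<in> B - ?Y'" using r'(1) by (auto simp: bij_betw_def)
      thus "r' (p x) = q (r' x)" using r'(2) x by (simp add: perm_restrict_simps)
    qed
    moreover have "p ` ?Y \<subseteq> ?Y" "p ` (A - ?Y) \<subseteq> A - ?Y"
      using orbit.step permutes_image[OF pp] by (auto simp: perm_restrict_simps)
    moreover obtain r1 where "bij_betw r1 ?Y ?Y'" "\<forall>x\<in>?Y. r1 (p x) = q (r1 x)"
      using orbit_intertwiner_exists[OF aY bY' b(2)] by blast
    ultimately have "\<exists>r. bij_betw r (?Y \<union> (A - ?Y)) (?Y' \<union> (B - ?Y')) \<and> (\<forall>x\<in>?Y \<union> (A - ?Y). r (p x) = q (r x))"
      using intertwiner_Un[of r1 ?Y ?Y' p q r' "A - ?Y" "B - ?Y'"] r'(1) by blast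
    moreover have "?Y \<union> (A - ?Y) = A" "?Y' \<union> (B - ?Y') = B"
      using permutes_orbit_subset[OF less.prems(2) a] permutes_orbit_subset[OF less.prems(4) b(1)] by auto
    ultimately show ?thesis by simp
  qed
qed

lemma conj_permutes:
  assumes "p permutes A" "r permutes A" shows "r \<circ> p \<circ> inv r permutes A"
  using assms by (intro permutes_compose permutes_inv) auto

lemma cycle_count_conj:
  assumes "p permutes {..<n}" "r permutes {..<n}"
  shows "cycle_count (r \<circ> p \<circ> inv r) {..<n} l = cycle_count p {..<n} l"
proof (rule sym, rule cycle_count_intertwining)
  show "bij_betw r {..<n} {..<n}" using assms(2) by (rule permutes_imp_bij)
  show "p ` {..<n} \<subseteq> {..<n}" using assms(1) by (simp add: permutes_image)
  show "\<forall>x\<in>{..<n}. r (p x) = (r \<circ> p \<circ> inv r) (r x)"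
    using permutes_inverses(2)[OF assms(2)] by simp
qed

lemma conj_class_if_cycle_count_eq:
  assumes "p permutes {..<n}" "q permutes {..<n}" "\<forall>l. cycle_count p {..<n} l = cycle_count q {..<n} l"
  shows "q \<in> conj_class n p"
proof -
  obtain r where r: "bij_betw r {..<n} {..<n}" "\<forall>x\<in>{..<n}. r (p x) = q (r x)"
    using intertwiner_if_cycle_count_eq[OF _ assms(1) _ assms(2,3)] by auto
  define r' where "r' x = (if x < n then r x else x)" for x
  have "bij_betw r' {..<n} {..<n}"
    using r(1) by (rule bij_betw_cong[THEN iffD1, rotated]) (simp add: r'_def)
  hence r': "r' permutes {..<n}" by (rule bij_imp_permutes) (simp add: r'_def)
  have qr': "q (r' x) = r' (p x)" for x
  proof (cases "x < n")
    case True thus ?thesis using r(2) permutes_in_image[OF assms(1)] by (simp add: r'_def)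
  next
    case False thus ?thesis using permutes_not_in[OF assms(1)] permutes_not_in[OF assms(2)]
      by (simp add: r'_def)
  qed
  have "q = r' \<circ> p \<circ> inv r'"
  proof
    fix y
    have "q y = q (r' (inv r' y))" using permutes_inverses(1)[OF r'] by simp
    thus "q y = (r' \<circ> p \<circ> inv r') y" using qr' by simp
  qed
  thus ?thesis unfolding conj_class_def using r' by blast
qed

lemma conj_class_iff_cycle_count:
  assumes "p permutes {..<n}"
  shows "q \<in> conj_class n p \<longleftrightarrow> q permutes {..<n} \<and> (\<forall>l. cycle_count q {..<n} l = cycle_count p {..<n} l)"
proof
  assume "q \<in> conj_class n p"
  then obtain r where "r permutes {..<n}" "q = r \<circ> p \<circ> inv r" unfolding conj_class_def by blast
  thus "q permutes {..<n} \<and> (\<forall>l. cycle_count q {..<n} l = cycle_count p {..<n} l)"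
    using conj_permutes[OF assms] cycle_count_conj[OF assms] by blast
qed (use conj_class_if_cycle_count_eq[OF assms] in auto)

lemma in_own_conj_class: "p permutes {..<n} \<Longrightarrow> p \<in> conj_class n p"
  using conj_class_iff_cycle_count[of p n p] by simp

lemma finite_conj_class: "finite (conj_class n p)"
  unfolding conj_class_def by (intro finite_imageI finite_permutations) simp

lemma finite_conj_classes: "finite (conj_classes n)"
  unfolding conj_classes_def by (intro finite_imageI finite_permutations) simp

lemma finite_conj_classes_mem: "C \<in> conj_classes n \<Longrightarrow> finite C"
  unfolding conj_classes_def using finite_conj_class by auto

lemma conj_classes_memD:
  assumes "C \<in> conj_classes n" "p \<in> C"
  shows "p permutes {..<n}" "C = conj_class n p"
proof -
  obtain q where q: "q permutes {..<n}" "C = conj_class n q"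
    using assms(1) unfolding conj_classes_def by auto
  have p: "p permutes {..<n}" "\<forall>l. cycle_count p {..<n} l = cycle_count q {..<n} l"
    using assms(2) q conj_class_iff_cycle_count[OF q(1)] by blast+
  show "p permutes {..<n}" by (rule p(1))
  show "C = conj_class n p"
  proof (rule set_eqI)
    fix s show "s \<in> C \<longleftrightarrow> s \<in> conj_class n p"
      using conj_class_iff_cycle_count[OF q(1), of s] conj_class_iff_cycle_count[OF p(1), of s] p(2) q(2)
      by presburger
  qed
qed

lemma conj_classes_mem_nonempty:
  assumes "C \<in> conj_classes n" obtains p where "p permutes {..<n}" "C = conj_class n p" "p \<in> C"
  using assms in_own_conj_class unfolding conj_classes_def by blast

lemma card_conj_classes_mem_pos:
  assumes "C \<in> conj_classes n" shows "card C > 0"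
proof -
  obtain p where "C = conj_class n p" "p \<in> C" using assms by (rule conj_classes_mem_nonempty)
  thus ?thesis using finite_conj_class[of n p] by (auto simp: card_gt_0_iff)
qed

lemma class_cycles_eq_cycle_count:
  assumes "C \<in> conj_classes n" "p \<in> C"
  shows "class_cycles n C l = cycle_count p {..<n} l"
proof -
  have "(SOME q. q \<in> C) \<in> C" by (rule someI[of "\<lambda>q. q \<in> C", OF assms(2)])
  hence "(SOME q. q \<in> C) \<in> conj_class n p" using conj_classes_memD(2)[OF assms] by simp
  thus ?thesis unfolding class_cycles_def num_cycles_eq_cycle_count
    using conj_class_iff_cycle_count[OF conj_classes_memD(1)[OF assms]] by blast
qed

lemma fixpts_eq_cycle_count:
  "C \<in> conj_classes n \<Longrightarrow> p \<in> C \<Longrightarrow> fixpts n C = cycle_count p {..<n} 1"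
  unfolding fixpts_def by (rule class_cycles_eq_cycle_count)

lemma cycle_count_out_of_range:
  assumes "p permutes {..<n}" "\<not> (1 \<le> l \<and> l \<le> n)"
  shows "cycle_count p {..<n} l = 0"
proof -
  have "card Y \<noteq> l" if Y: "Y \<in> perm_cycles p {..<n}" for Y
  proof -
    obtain x where x: "x < n" "Y = orbit p x" using Y unfolding perm_cycles_def by blast
    have sub: "Y \<subseteq> {..<n}" using x permutes_orbit_subset[OF assms(1)] by simp
    hence "card Y \<le> n" using card_mono[OF _ sub] by simp
    moreover have "Y \<noteq> {}" using x orbit_nonempty by simp
    ultimately show ?thesis using assms(2) finite_subset[OF sub] by (auto simp: Suc_le_eq card_gt_0_iff)
  qed
  hence "{Y \<in> perm_cycles p {..<n}. card Y = l} = {}" by blast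
  thus ?thesis unfolding cycle_count_def by (metis card.empty)
qed

lemma conj_mem_conj_classes:
  assumes "C \<in> conj_classes n" "p \<in> C" "u permutes {..<n}"
  shows "u \<circ> p \<circ> inv u \<in> C"
proof -
  have p: "p permutes {..<n}" "C = conj_class n p" using conj_classes_memD[OF assms(1,2)] by auto
  show ?thesis unfolding p(2) conj_class_def using assms(3) by blast
qed

lemma cycle_count_Un:
  assumes "A \<inter> B = {}" "q ` A \<subseteq> A" "q ` B \<subseteq> B" "finite A" "finite B"
  shows "cycle_count q (A \<union> B) l = cycle_count q A l + cycle_count q B l"
proof -
  have disj: "perm_cycles q A \<inter> perm_cycles q B = {}"
  proof (rule ccontr)
    assume "perm_cycles q A \<inter> perm_cycles q B \<noteq> {}"
    then obtain x y where xy: "x \<in> A" "y \<in> B" "orbit q x = orbit q y" unfolding perm_cycles_def by blast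
    have "orbit q x \<subseteq> A" by (rule orbit_subset_if_image_subset[OF assms(2) xy(1)])
    moreover have "orbit q x \<subseteq> B" unfolding xy(3) by (rule orbit_subset_if_image_subset[OF assms(3) xy(2)])
    ultimately show False using assms(1) orbit_nonempty[of q x] by blast
  qed
  have "{Y \<in> perm_cycles q (A \<union> B). card Y = l}
      = {Y \<in> perm_cycles q A. card Y = l} \<union> {Y \<in> perm_cycles q B. card Y = l}"
    by (auto simp: perm_cycles_def)
  moreover have "card \<dots> = card {Y \<in> perm_cycles q A. card Y = l} + card {Y \<in> perm_cycles q B. card Y = l}"
    by (rule card_Un_disjoint) (use disj assms(4,5) in \<open>auto simp: finite_perm_cycles\<close>)
  ultimately show ?thesis unfolding cycle_count_def by simp
qed

definition perm_join :: "nat \<Rightarrow> nat \<Rightarrow> (nat \<Rightarrow> nat) \<Rightarrow> (nat \<Rightarrow> nat) \<Rightarrow> nat \<Rightarrow> nat" where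
  "perm_join k n p1 p2 x = (if x < k then p1 x else if x < n then p2 (x - k) + k else x)"

lemma perm_join_permutes:
  assumes "k \<le> n" "p1 permutes {..<k}" "p2 permutes {..<n - k}"
  shows "perm_join k n p1 p2 permutes {..<n}"
proof -
  let ?c = "perm_join k n p1 p2"
  have p1k: "p1 x < k" if "x < k" for x using permutes_in_image[OF assms(2)] that by simp
  have p2k: "p2 x < n - k" if "x < n - k" for x using permutes_in_image[OF assms(3)] that by simp
  have "p1 x < n" if "x < k" for x using p1k[OF that] assms(1) by linarith
  hence imn: "?c ` {..<n} \<subseteq> {..<n}"
    using p2k by (auto simp: perm_join_def less_diff_conv)
  have side: "?c x < k \<longleftrightarrow> x < k" if "x < n" for x using p1k that by (simp add: perm_join_def)
  have inj: "inj_on ?c {..<n}"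
  proof (rule inj_onI)
    fix x y assume xy: "x \<in> {..<n}" "y \<in> {..<n}" "?c x = ?c y"
    show "x = y"
    proof (cases "x < k"; cases "y < k")
      assume "x < k" "y < k" thus ?thesis using xy permutes_inj[OF assms(2)] by (simp add: perm_join_def inj_eq)
    next
      assume "\<not> x < k" "\<not> y < k"
      hence "p2 (x - k) = p2 (y - k)" using xy by (simp add: perm_join_def)
      hence "x - k = y - k" using permutes_inj[OF assms(3)] by (simp add: inj_eq)
      thus ?thesis using \<open>\<not> x < k\<close> \<open>\<not> y < k\<close> by simp
    qed (use xy side in \<open>metis lessThan_iff\<close>)+
  qed
  have "?c ` {..<n} = {..<n}" by (rule endo_inj_surj[OF _ imn inj]) simp
  hence "bij_betw ?c {..<n} {..<n}" using inj by (simp add: bij_betw_def)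
  thus ?thesis by (rule bij_imp_permutes) (use assms(1) in \<open>simp add: perm_join_def\<close>)
qed

lemma perm_join_image_prefix:
  assumes "p1 permutes {..<k}"
  shows "perm_join k n p1 p2 ` {..<k} = {..<k}"
proof -
  have "perm_join k n p1 p2 ` {..<k} = p1 ` {..<k}" by (intro image_cong) (auto simp: perm_join_def)
  thus ?thesis using permutes_image[OF assms] by simp
qed

lemma cycle_count_perm_join:
  assumes "k \<le> n" "p1 permutes {..<k}" "p2 permutes {..<n - k}"
  shows "cycle_count (perm_join k n p1 p2) {..<n} l = cycle_count p1 {..<k} l + cycle_count p2 {..<n - k} l"
proof -
  let ?c = "perm_join k n p1 p2"
  have p1k: "p1 x < k" if "x < k" for x using permutes_in_image[OF assms(2)] that by simp
  have p2k: "p2 x < n - k" if "x < n - k" for x using permutes_in_image[OF assms(3)] that by simp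
  have "{..<n} = {..<k} \<union> {k..<n}" using assms(1) by auto
  moreover have "cycle_count ?c ({..<k} \<union> {k..<n}) l = cycle_count ?c {..<k} l + cycle_count ?c {k..<n} l"
    by (rule cycle_count_Un) (use p1k p2k in \<open>auto simp: perm_join_def less_diff_conv\<close>)
  moreover have "cycle_count p1 {..<k} l = cycle_count ?c {..<k} l"
    by (rule cycle_count_intertwining[of id]) (use p1k in \<open>auto simp: perm_join_def\<close>)
  moreover have "cycle_count p2 {..<n - k} l = cycle_count ?c {k..<n} l"
  proof (rule cycle_count_intertwining[of "\<lambda>x. x + k"])
    have "(\<lambda>x. x + k) ` {..<n - k} = {k..<n}"
      using assms(1) image_add_atLeastLessThan[of k 0 "n - k"] by (simp add: lessThan_atLeast0)
    thus "bij_betw (\<lambda>x. x + k) {..<n - k} {k..<n}" by (simp add: bij_betw_def inj_on_def)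
    show "p2 ` {..<n - k} \<subseteq> {..<n - k}" using p2k by auto
    show "\<forall>x\<in>{..<n - k}. p2 x + k = ?c (x + k)" by (auto simp: perm_join_def)
  qed
  ultimately show ?thesis by simp
qed

lemma perm_join_inj:
  assumes "k \<le> n" "p1 permutes {..<k}" "q1 permutes {..<k}" "p2 permutes {..<n - k}" "q2 permutes {..<n - k}"
    and "perm_join k n p1 p2 = perm_join k n q1 q2"
  shows "p1 = q1 \<and> p2 = q2"
proof
  show "p1 = q1"
  proof
    fix x show "p1 x = q1 x"
    proof (cases "x < k")
      case True thus ?thesis using fun_cong[OF assms(6), of x] by (simp add: perm_join_def)
    qed (simp add: permutes_not_in[OF assms(2)] permutes_not_in[OF assms(3)])
  qed
  show "p2 = q2"
  proof
    fix x show "p2 x = q2 x"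
    proof (cases "x < n - k")
      case True
      hence "x + k < n" "\<not> x + k < k" using assms(1) by auto
      thus ?thesis using fun_cong[OF assms(6), of "x + k"] by (simp add: perm_join_def)
    qed (simp add: permutes_not_in[OF assms(4)] permutes_not_in[OF assms(5)])
  qed
qed

definition class_splittings :: "nat \<Rightarrow> nat \<Rightarrow> (nat \<Rightarrow> nat) set \<Rightarrow> ((nat \<Rightarrow> nat) set \<times> (nat \<Rightarrow> nat) set) set" where
  "class_splittings n k C =
     {(C1, C2). C1 \<in> conj_classes k \<and> C2 \<in> conj_classes (n - k) \<and> class_prod_eq n k C C1 C2}"

lemma finite_class_splittings: "finite (class_splittings n k C)"
  by (rule finite_subset[of _ "conj_classes k \<times> conj_classes (n - k)"])
     (auto simp: class_splittings_def finite_conj_classes)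

lemma perm_join_mem_class_splitting:
  assumes "C \<in> conj_classes n" "k \<le> n" "(C1, C2) \<in> class_splittings n k C" "p1 \<in> C1" "p2 \<in> C2"
  shows "perm_join k n p1 p2 \<in> C"
proof -
  have C1: "C1 \<in> conj_classes k" and C2: "C2 \<in> conj_classes (n - k)"
    and split: "class_prod_eq n k C C1 C2" using assms(3) by (auto simp: class_splittings_def)
  obtain p0 where p0: "p0 permutes {..<n}" "C = conj_class n p0" "p0 \<in> C"
    using assms(1) by (rule conj_classes_mem_nonempty)
  note p1 = conj_classes_memD(1)[OF C1 assms(4)] and p2 = conj_classes_memD(1)[OF C2 assms(5)]
  note join = perm_join_permutes[OF assms(2) p1 p2]
  have "cycle_count (perm_join k n p1 p2) {..<n} l = cycle_count p0 {..<n} l" for l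
  proof (cases "1 \<le> l \<and> l \<le> n")
    case True
    hence "class_cycles n C l = class_cycles k C1 l + class_cycles (n - k) C2 l"
      using split unfolding class_prod_eq_def by auto
    thus ?thesis
      using cycle_count_perm_join[OF assms(2) p1 p2] class_cycles_eq_cycle_count[OF assms(1) p0(3)]
        class_cycles_eq_cycle_count[OF C1 assms(4)] class_cycles_eq_cycle_count[OF C2 assms(5)] by simp
  next
    case False
    thus ?thesis using cycle_count_out_of_range[OF join False] cycle_count_out_of_range[OF p0(1) False] by simp
  qed
  thus ?thesis unfolding p0(2) using conj_class_iff_cycle_count[OF p0(1)] join by blast
qed

text \<open>Equality holds in fact; the join map is a bijection onto the setwise stabiliser of {..<k}.\<close>
lemma splitting_sum_le_card_stabiliser:
  assumes "C \<in> conj_classes n" "k \<le> n"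
  shows "(\<Sum>(C1, C2) \<in> class_splittings n k C. card C1 * card C2) \<le> card {p \<in> C. p ` {..<k} = {..<k}}"
proof -
  let ?P = "class_splittings n k C" let ?Sig = "SIGMA x:?P. fst x \<times> snd x"
  let ?join = "\<lambda>z. perm_join k n (fst (snd z)) (snd (snd z))"
  have perms: "p1 permutes {..<k} \<and> p2 permutes {..<n - k} \<and> C1 = conj_class k p1 \<and> C2 = conj_class (n - k) p2"
    if "(C1, C2) \<in> ?P" "p1 \<in> C1" "p2 \<in> C2" for C1 C2 p1 p2
  proof -
    have "C1 \<in> conj_classes k" "C2 \<in> conj_classes (n - k)" using that(1) by (auto simp: class_splittings_def)
    thus ?thesis using conj_classes_memD that(2,3) by blast
  qed
  have "(\<Sum>(C1, C2) \<in> ?P. card C1 * card C2) = (\<Sum>x\<in>?P. card (fst x \<times> snd x))"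
    by (intro sum.cong refl) (auto simp: card_cartesian_product)
  also have "\<dots> = card ?Sig"
    by (rule card_SigmaI[symmetric, OF finite_class_splittings])
       (auto simp: class_splittings_def finite_conj_classes_mem)
  also have "\<dots> \<le> card {p \<in> C. p ` {..<k} = {..<k}}"
  proof (rule card_inj_on_le)
    show "?join ` ?Sig \<subseteq> {p \<in> C. p ` {..<k} = {..<k}}"
    proof (rule image_subsetI)
      fix z assume "z \<in> ?Sig"
      then obtain C1 C2 p1 p2 where z: "z = ((C1, C2), (p1, p2))" "(C1, C2) \<in> ?P" "p1 \<in> C1" "p2 \<in> C2"
        by auto
      show "?join z \<in> {p \<in> C. p ` {..<k} = {..<k}}"
        using perm_join_mem_class_splitting[OF assms z(2-4)] perm_join_image_prefix[of p1 k n p2]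
          perms[OF z(2-4)] z(1) by simp
    qed
    show "inj_on ?join ?Sig"
    proof (rule inj_onI)
      fix z w assume "z \<in> ?Sig" "w \<in> ?Sig" and eq: "?join z = ?join w"
      then obtain C1 C2 p1 p2 D1 D2 q1 q2 where
        z: "z = ((C1, C2), (p1, p2))" "(C1, C2) \<in> ?P" "p1 \<in> C1" "p2 \<in> C2" and
        w: "w = ((D1, D2), (q1, q2))" "(D1, D2) \<in> ?P" "q1 \<in> D1" "q2 \<in> D2"
        by auto
      note pz = perms[OF z(2-4)] and pw = perms[OF w(2-4)]
      have "p1 = q1 \<and> p2 = q2"
        using perm_join_inj[OF assms(2), of p1 q1 p2 q2] pz pw eq z(1) w(1) by simp
      thus "z = w" using z(1) w(1) pz pw by simp
    qed
  qed (use finite_conj_classes_mem[OF assms(1)] in simp)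
  finally show ?thesis .
qed

lemma card_stabiliser_le:
  assumes "C \<in> conj_classes n" "u permutes {..<n}" "u ` A = B"
  shows "card {p \<in> C. p ` A = A} \<le> card {p \<in> C. p ` B = B}"
proof (rule card_inj_on_le)
  let ?h = "\<lambda>p. u \<circ> p \<circ> inv u"
  show "inj_on ?h {p \<in> C. p ` A = A}"
  proof (rule inj_onI)
    fix p q assume "?h p = ?h q"
    hence "inv u \<circ> ?h p \<circ> u = inv u \<circ> ?h q \<circ> u" by simp
    thus "p = q" using permutes_inverses[OF assms(2)] by (simp add: fun_eq_iff)
  qed
  have "inv u ` B = A"
    using assms(3) permutes_inverses(2)[OF assms(2)] by (auto simp: image_comp image_iff)
  have stab: "?h p ` B = B" if "p ` A = A" for p
  proof -
    have "?h p ` B = u ` p ` inv u ` B" by (simp add: image_comp)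
    thus ?thesis using that assms(3) \<open>inv u ` B = A\<close> by simp
  qed
  show "?h ` {p \<in> C. p ` A = A} \<subseteq> {p \<in> C. p ` B = B}"
  proof (rule image_subsetI)
    fix p assume "p \<in> {p \<in> C. p ` A = A}"
    thus "?h p \<in> {p \<in> C. p ` B = B}" using conj_mem_conj_classes[OF assms(1) _ assms(2)] stab by blast
  qed
  show "finite {p \<in> C. p ` B = B}" using finite_conj_classes_mem[OF assms(1)] by simp
qed

lemma exists_permutes_image_eq:
  assumes "finite A" "S \<subseteq> A" "T \<subseteq> A" "card S = card T"
  shows "\<exists>t. t permutes A \<and> t ` S = T"
proof -
  obtain h1 where h1: "bij_betw h1 S T"
    using finite_same_card_bij[OF finite_subset[OF assms(2,1)] finite_subset[OF assms(3,1)] assms(4)] by blast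
  have "card (A - S) = card (A - T)"
    using assms by (simp add: card_Diff_subset finite_subset)
  then obtain h2 where h2: "bij_betw h2 (A - S) (A - T)"
    using finite_same_card_bij[OF finite_Diff[OF assms(1)] finite_Diff[OF assms(1)]] by blast
  define t where "t x = (if x \<in> S then h1 x else if x \<in> A then h2 x else x)" for x
  have "bij_betw t S T" using h1 by (rule bij_betw_cong[THEN iffD1, rotated]) (simp add: t_def)
  moreover have "bij_betw t (A - S) (A - T)"
    using h2 by (rule bij_betw_cong[THEN iffD1, rotated]) (simp add: t_def)
  ultimately have "bij_betw t (S \<union> (A - S)) (T \<union> (A - T))" by (rule bij_betw_combine) auto
  moreover have "S \<union> (A - S) = A" "T \<union> (A - T) = A" using assms(2,3) by auto
  ultimately have "bij_betw t A A" by simp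
  moreover have "t x = x" if "x \<notin> A" for x using that assms(2) by (auto simp: t_def)
  ultimately have "t permutes A" by (rule bij_imp_permutes)
  moreover have "t ` S = T" using \<open>bij_betw t S T\<close> by (simp add: bij_betw_def)
  ultimately show ?thesis by blast
qed

lemma card_filter_eq_sum: "finite A \<Longrightarrow> card {x \<in> A. P x} = (\<Sum>x\<in>A. if P x then 1 else 0)"
  using sum.inter_filter[of A "\<lambda>_. 1::nat" P] by simp

definition invariant_subsets :: "('a \<Rightarrow> 'a) \<Rightarrow> 'a set \<Rightarrow> nat \<Rightarrow> 'a set set" where
  "invariant_subsets p A k = {S. S \<subseteq> A \<and> card S = k \<and> p ` S = S}"

text \<open>Double counting of the pairs (p, S); every k-subset S has as many stabilisers in C
  as {..<k}, since C is closed under conjugation.\<close>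
lemma card_stabiliser_mult_binomial:
  assumes "C \<in> conj_classes n" "k \<le> n"
  shows "card {p \<in> C. p ` {..<k} = {..<k}} * (n choose k) = (\<Sum>p\<in>C. card (invariant_subsets p {..<n} k))"
proof -
  let ?K = "{S. S \<subseteq> {..<n} \<and> card S = k}"
  define st where "st = card {p \<in> C. p ` {..<k} = {..<k}}"
  have fin: "finite C" "finite ?K"
    using finite_conj_classes_mem[OF assms(1)] finite_subset[of ?K "Pow {..<n}"] by auto
  have same: "card {p \<in> C. p ` S = S} = st" if "S \<in> ?K" for S
  proof -
    have S: "S \<subseteq> {..<n}" "{..<k} \<subseteq> {..<n}" "card S = card {..<k}" using that assms(2) by auto
    obtain t where t: "t permutes {..<n}" "t ` {..<k} = S"
      using exists_permutes_image_eq[OF finite_lessThan S(2,1) S(3)[symmetric]] by blast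
    obtain t' where t': "t' permutes {..<n}" "t' ` S = {..<k}"
      using exists_permutes_image_eq[OF finite_lessThan S] by blast
    show ?thesis unfolding st_def
      using card_stabiliser_le[OF assms(1) t'] card_stabiliser_le[OF assms(1) t] by (rule le_antisym)
  qed
  have "st * (n choose k) = (\<Sum>S\<in>?K. st)"
    using n_subsets[of "{..<n}" k] by simp
  also have "\<dots> = (\<Sum>S\<in>?K. card {p \<in> C. p ` S = S})"
  proof (rule sum.cong)
    fix S assume "S \<in> ?K" thus "st = card {p \<in> C. p ` S = S}" by (rule same[symmetric])
  qed simp
  also have "\<dots> = (\<Sum>S\<in>?K. \<Sum>p\<in>C. if p ` S = S then 1 else 0)"
    by (intro sum.cong refl card_filter_eq_sum fin)
  also have "\<dots> = (\<Sum>p\<in>C. \<Sum>S\<in>?K. if p ` S = S then 1 else 0)" by (rule sum.swap)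
  also have "\<dots> = (\<Sum>p\<in>C. card {S \<in> ?K. p ` S = S})"
    by (intro sum.cong refl card_filter_eq_sum[symmetric] fin)
  also have "\<dots> = (\<Sum>p\<in>C. card (invariant_subsets p {..<n} k))"
    unfolding invariant_subsets_def by (intro sum.cong refl arg_cong[where f=card]) auto
  finally show ?thesis unfolding st_def .
qed

lemma card_invariant_subsets_le_pow_cycles:
  assumes "p permutes A" "finite A"
  shows "card (invariant_subsets p A k) \<le> 2 ^ card (perm_cycles p A)"
proof -
  let ?cycles_in = "\<lambda>S. {Y \<in> perm_cycles p A. Y \<subseteq> S}"
  have union: "\<Union>(?cycles_in S) = S" if "S \<in> invariant_subsets p A k" for S
  proof
    have S: "S \<subseteq> A" "p ` S = S" using that unfolding invariant_subsets_def by auto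
    show "S \<subseteq> \<Union>(?cycles_in S)"
    proof
      fix x assume x: "x \<in> S"
      have "orbit p x \<subseteq> S" using S(2) x by (intro orbit_subset_if_image_subset) auto
      moreover have "orbit p x \<in> perm_cycles p A" unfolding perm_cycles_def using S(1) x by blast
      moreover have "x \<in> orbit p x" by (rule self_in_orbit_if_permutes[OF assms])
      ultimately show "x \<in> \<Union>(?cycles_in S)" by blast
    qed
  qed blast
  have "inj_on ?cycles_in (invariant_subsets p A k)"
  proof (rule inj_onI)
    fix S T assume "S \<in> invariant_subsets p A k" "T \<in> invariant_subsets p A k" "?cycles_in S = ?cycles_in T"
    thus "S = T" using union by metis
  qed
  hence "card (invariant_subsets p A k) \<le> card (Pow (perm_cycles p A))"
    by (rule card_inj_on_le) (auto simp: finite_perm_cycles assms(2))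
  thus ?thesis by (simp add: card_Pow finite_perm_cycles assms(2))
qed


lemma splitting_sum_mult_binomial_le:
  assumes "C \<in> conj_classes n" "k \<le> n" "\<And>p. p \<in> C \<Longrightarrow> real (card (invariant_subsets p {..<n} k)) \<le> B"
  shows "(\<Sum>(C1, C2) \<in> class_splittings n k C. real (card C1) * real (card C2)) * real (n choose k)
       \<le> real (card C) * B"
proof -
  have "(\<Sum>(C1, C2) \<in> class_splittings n k C. card C1 * card C2) * (n choose k)
      \<le> card {p \<in> C. p ` {..<k} = {..<k}} * (n choose k)"
    by (rule mult_le_mono1[OF splitting_sum_le_card_stabiliser[OF assms(1,2)]])
  also have "\<dots> = (\<Sum>p\<in>C. card (invariant_subsets p {..<n} k))"
    by (rule card_stabiliser_mult_binomial[OF assms(1,2)])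
  finally have "real ((\<Sum>(C1, C2) \<in> class_splittings n k C. card C1 * card C2) * (n choose k))
      \<le> real (\<Sum>p\<in>C. card (invariant_subsets p {..<n} k))" by (simp only: of_nat_le_iff)
  also have "\<dots> \<le> real (card C) * B"
    unfolding of_nat_sum using sum_bounded_above[of C _ B] assms(3) by simp
  finally show ?thesis by (simp add: case_prod_beta)
qed

lemma splitting_sum_card_fst_le:
  "(\<Sum>(C1, C2) \<in> class_splittings n k C. real (card C1))
     \<le> (\<Sum>(C1, C2) \<in> class_splittings n k C. real (card C1) * real (card C2))"
proof (rule sum_mono, clarify)
  fix C1 C2 assume "(C1, C2) \<in> class_splittings n k C"
  hence "card C2 \<ge> 1" using card_conj_classes_mem_pos by (force simp: class_splittings_def)
  thus "real (card C1) \<le> real (card C1) * real (card C2)" by (simp add: mult_le_cancel_left1)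
qed

lemma sum_card_perm_cycles:
  assumes "p permutes A" "finite A"
  shows "sum card (perm_cycles p A) = card A"
proof -
  have sub: "Y \<subseteq> A" if "Y \<in> perm_cycles p A" for Y
    using that permutes_orbit_subset[OF assms(1)] unfolding perm_cycles_def by auto
  have "pairwise disjnt (perm_cycles p A)"
  proof (rule pairwiseI)
    fix Y Z assume "Y \<in> perm_cycles p A" "Z \<in> perm_cycles p A" "Y \<noteq> Z"
    then obtain x y where xy: "Y = orbit p x" "Z = orbit p y" unfolding perm_cycles_def by blast
    show "disjnt Y Z"
    proof (rule ccontr)
      assume "\<not> disjnt Y Z"
      then obtain z where "z \<in> orbit p x" "z \<in> orbit p y" unfolding disjnt_def xy by blast
      hence "orbit p x = orbit p y" using orbit_eq_if_in_orbit[OF assms] by metis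
      with \<open>Y \<noteq> Z\<close> xy show False by simp
    qed
  qed
  moreover have "finite Y" if "Y \<in> perm_cycles p A" for Y using sub[OF that] assms(2) by (rule finite_subset)
  ultimately have "card (\<Union>(perm_cycles p A)) = sum card (perm_cycles p A)" by (rule card_Union_disjoint)
  moreover have "\<Union>(perm_cycles p A) = A"
    using sub self_in_orbit_if_permutes[OF assms] unfolding perm_cycles_def by blast
  ultimately show ?thesis by simp
qed

text \<open>A cycle of length at least 2 uses at least two points.\<close>
lemma card_perm_cycles_le:
  assumes "p permutes A" "finite A"
  shows "2 * card (perm_cycles p A) \<le> card A + cycle_count p A 1"
proof -
  let ?O = "perm_cycles p A"
  have fin: "finite ?O" by (rule finite_perm_cycles[OF assms(2)])
  have two_le: "2 \<le> card Y + (if card Y = 1 then 1 else 0)" if Y: "Y \<in> ?O" for Y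
  proof -
    obtain x where x: "x \<in> A" "Y = orbit p x" using Y unfolding perm_cycles_def by blast
    hence "Y \<subseteq> A" using permutes_orbit_subset[OF assms(1)] by simp
    hence "finite Y" using assms(2) by (rule finite_subset)
    moreover have "Y \<noteq> {}" using x(2) orbit_nonempty by simp
    ultimately have "card Y \<noteq> 0" by simp
    thus ?thesis by (cases "card Y = 1") auto
  qed
  have "2 * card ?O = (\<Sum>Y\<in>?O. 2)" by simp
  also have "\<dots> \<le> (\<Sum>Y\<in>?O. card Y + (if card Y = 1 then 1 else 0))" by (rule sum_mono) (rule two_le)
  also have "\<dots> = card A + cycle_count p A 1"
    unfolding sum.distrib sum_card_perm_cycles[OF assms] cycle_count_def card_filter_eq_sum[OF fin] ..
  finally show ?thesis .
qed

lemma card_fixpoints_eq_cycle_count: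
  assumes "p permutes A" "finite A"
  shows "card {x \<in> A. p x = x} = cycle_count p A 1"
proof -
  have "{Y \<in> perm_cycles p A. card Y = 1} = (\<lambda>x. {x}) ` {x \<in> A. p x = x}"
  proof (intro equalityI subsetI)
    fix Y assume "Y \<in> {Y \<in> perm_cycles p A. card Y = 1}"
    then obtain x where x: "x \<in> A" "Y = orbit p x" "card Y = 1" unfolding perm_cycles_def by auto
    from \<open>card Y = 1\<close> obtain y where "Y = {y}" by (rule card_1_singletonE)
    hence "Y = {x}" using self_in_orbit_if_permutes[OF assms, of x] x(2) by auto
    hence "p x = x" using x(2) orbit_eq_singleton_iff[of p x] by simp
    thus "Y \<in> (\<lambda>x. {x}) ` {x \<in> A. p x = x}" using x(1) \<open>Y = {x}\<close> by blast
  next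
    fix Y assume "Y \<in> (\<lambda>x. {x}) ` {x \<in> A. p x = x}"
    then obtain x where x: "x \<in> A" "p x = x" "Y = {x}" by auto
    hence "orbit p x = Y" using orbit_eq_singleton_iff[of p x] by simp
    thus "Y \<in> {Y \<in> perm_cycles p A. card Y = 1}" unfolding perm_cycles_def using x by auto
  qed
  thus ?thesis unfolding cycle_count_def by (simp add: card_image)
qed

lemma permutes_image_Diff:
  assumes "p permutes A" "p ` S = S"
  shows "p ` (A - S) = A - S"
  using image_set_diff[OF permutes_inj[OF assms(1)], of A S] permutes_image[OF assms(1)] assms(2) by simp

lemma card_invariant_subsets_codim1_le:
  assumes "p permutes A" "finite A" "A \<noteq> {}"
  shows "card (invariant_subsets p A (card A - 1)) \<le> cycle_count p A 1"
proof -
  have "invariant_subsets p A (card A - 1) \<subseteq> (\<lambda>x. A - {x}) ` {x \<in> A. p x = x}"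
  proof
    fix S assume "S \<in> invariant_subsets p A (card A - 1)"
    hence S: "S \<subseteq> A" "card S = card A - 1" "p ` S = S" unfolding invariant_subsets_def by auto
    have "card (A - S) = 1" using S assms(2,3) by (simp add: card_Diff_subset finite_subset card_gt_0_iff Suc_leI)
    then obtain x where x: "A - S = {x}" by (rule card_1_singletonE)
    have "p x = x" using permutes_image_Diff[OF assms(1) S(3)] x by simp
    moreover have "S = A - {x}" using x S(1) by auto
    ultimately show "S \<in> (\<lambda>x. A - {x}) ` {x \<in> A. p x = x}" using x by blast
  qed
  hence "card (invariant_subsets p A (card A - 1)) \<le> card ((\<lambda>x. A - {x}) ` {x \<in> A. p x = x})"
    by (intro card_mono) (auto simp: assms(2))
  also have "\<dots> \<le> card {x \<in> A. p x = x}" by (rule card_image_le) (simp add: assms(2))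
  finally show ?thesis using card_fixpoints_eq_cycle_count[OF assms(1,2)] by simp
qed

text \<open>The complement of an invariant set of codimension 2 is either a pair of fixed points
  or of the form {x, p x}.\<close>
lemma card_invariant_subsets_codim2_le:
  assumes "p permutes A" "finite A" "2 \<le> card A"
  shows "card (invariant_subsets p A (card A - 2)) \<le> (cycle_count p A 1 choose 2) + card A"
proof -
  let ?F = "{x \<in> A. p x = x}"
  let ?T = "{T. T \<subseteq> ?F \<and> card T = 2} \<union> (\<lambda>x. {x, p x}) ` A"
  have fin: "finite ?T" using assms(2) by (auto intro: finite_subset[of _ "Pow A"])
  have "invariant_subsets p A (card A - 2) \<subseteq> (\<lambda>T. A - T) ` ?T"
  proof
    fix S assume "S \<in> invariant_subsets p A (card A - 2)"
    hence S: "S \<subseteq> A" "card S = card A - 2" "p ` S = S" unfolding invariant_subsets_def by auto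
    have "card (A - S) = 2" using S assms by (simp add: card_Diff_subset finite_subset)
    then obtain x y where xy: "A - S = {x, y}" "x \<noteq> y" by (auto simp: card_2_iff)
    have pT: "p ` {x, y} = {x, y}" using permutes_image_Diff[OF assms(1) S(3)] xy by simp
    have "{x, y} \<in> ?T"
    proof (cases "p x = x")
      case True
      have "p y \<noteq> x" using True xy(2) permutes_inj[OF assms(1)] by (metis injD)
      hence "p y = y" using pT by blast
      thus ?thesis using True xy by auto
    next
      case False
      hence "p x = y" using pT by blast
      thus ?thesis using xy by blast
    qed
    moreover have "S = A - {x, y}" using xy S(1) by auto
    ultimately show "S \<in> (\<lambda>T. A - T) ` ?T" by blast
  qed
  hence "card (invariant_subsets p A (card A - 2)) \<le> card ((\<lambda>T. A - T) ` ?T)"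
    by (intro card_mono) (use fin in auto)
  also have "\<dots> \<le> card ?T" by (rule card_image_le[OF fin])
  also have "\<dots> \<le> card {T. T \<subseteq> ?F \<and> card T = 2} + card ((\<lambda>x. {x, p x}) ` A)" by (rule card_Un_le)
  also have "card {T. T \<subseteq> ?F \<and> card T = 2} = card ?F choose 2" by (rule n_subsets) (simp add: assms(2))
  also have "card ((\<lambda>x. {x, p x}) ` A) \<le> card A" by (rule card_image_le[OF assms(2)])
  finally show ?thesis using card_fixpoints_eq_cycle_count[OF assms(1,2)] by simp
qed

lemma real_choose_two: "real (m choose 2) = real m * (real m - 1) / 2"
proof (cases m)
  case (Suc k)
  have "even (Suc k * k)" by simp
  thus ?thesis using Suc by (simp add: choose_two real_of_nat_div algebra_simps)
qed simp

lemma conj_classes_mem_fixpts: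
  assumes "C \<in> conj_classes n" "p \<in> C"
  shows "p permutes {..<n}" "cycle_count p {..<n} 1 = fixpts n C"
  using conj_classes_memD(1)[OF assms] fixpts_eq_cycle_count[OF assms] by simp_all

lemma splitting_sum_mult_binomial_le_powr:
  assumes "C \<in> conj_classes n" "k \<le> n" "real (fixpts n C) \<le> real n / 4"
  shows "(\<Sum>(C1, C2) \<in> class_splittings n k C. real (card C1) * real (card C2)) * real (n choose k)
       \<le> real (card C) * 2 powr (5/8 * real n)"
proof (rule splitting_sum_mult_binomial_le[OF assms(1,2)])
  fix p assume "p \<in> C"
  note p = conj_classes_mem_fixpts[OF assms(1) this]
  have "2 * real (card (perm_cycles p {..<n})) \<le> real n + real (fixpts n C)"
    using card_perm_cycles_le[OF p(1)] p(2) by (simp flip: of_nat_mult of_nat_add)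
  hence "real (card (perm_cycles p {..<n})) \<le> 5/8 * real n" using assms(3) by linarith
  hence "2 powr real (card (perm_cycles p {..<n})) \<le> 2 powr (5/8 * real n)" by simp
  moreover have "real (card (invariant_subsets p {..<n} k)) \<le> real (2 ^ card (perm_cycles p {..<n}))"
    using card_invariant_subsets_le_pow_cycles[OF p(1) finite_lessThan] by (simp only: of_nat_le_iff)
  moreover have "real (2 ^ card (perm_cycles p {..<n})) = 2 powr real (card (perm_cycles p {..<n}))"
    by (simp add: powr_realpow)
  ultimately show "real (card (invariant_subsets p {..<n} k)) \<le> 2 powr (5/8 * real n)" by linarith
qed

lemma binomial_ge_powr:
  assumes "real n / 2 < real k" "real k \<le> 5/8 * real n"
  shows "2 powr (3/4 * real n) / (real n + 1) \<le> real (n choose k)"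
proof -
  define j where "j = n - k"
  have kn: "k \<le> n" using assms by linarith
  have j: "real j \<ge> 3/8 * real n" "2 * j \<le> n" using assms kn by (simp_all add: j_def)
  have "j > 0" using j(1) assms by (cases "j = 0") auto
  have "2 powr (3/4 * real n) \<le> 2 powr (real (2 * j))" using j(1) by (intro powr_mono) auto
  also have "\<dots> = 4 ^ j" by (subst powr_realpow) (simp_all add: power_mult)
  finally have "2 powr (3/4 * real n) / (real n + 1) \<le> 4 ^ j / (2 * real j)"
    using j(2) \<open>j > 0\<close> by (intro frac_le) auto
  also have "\<dots> \<le> real ((2 * j) choose j)" by (rule central_binomial_lower_bound[OF \<open>j > 0\<close>])
  also have "\<dots> \<le> real (n choose j)" using binomial_right_mono[OF j(2)] by simp
  also have "n choose j = n choose k" using kn by (simp add: j_def binomial_symmetric[symmetric])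
  finally show ?thesis .
qed

lemma poly_powr_le_exp_powr:
  assumes "real n + 1 \<le> exp (real n / 50)"
  shows "(real n + 1) * 2 powr (5/8 * real n) \<le> exp (- (3/50) * real n) * 2 powr (3/4 * real n)"
proof -
  have "real n / 50 + 5/8 * real n * ln 2 \<le> - (3/50) * real n + 3/4 * real n * ln 2"
    using ln2_ge_two_thirds mult_left_mono[OF ln2_ge_two_thirds, of "real n"] by simp
  hence "exp (real n / 50) * exp (5/8 * real n * ln 2) \<le> exp (- (3/50) * real n) * exp (3/4 * real n * ln 2)"
    by (simp flip: exp_add)
  thus ?thesis using assms by (simp add: powr_def) (smt (verit) exp_gt_zero mult_right_mono)
qed

lemma eventually_splitting_sum_le_exp:
  "\<forall>\<^sub>F n in sequentially. \<forall>C \<in> conj_classes n. real (fixpts n C) \<le> real n / 4 \<longrightarrow>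
     (\<forall>k. real n / 2 < real k \<and> real k \<le> 5/8 * real n \<longrightarrow>
        (\<Sum>(C1, C2) \<in> class_splittings n k C. real (card C1) * real (card C2)) \<le> exp (- (3/50) * real n) * real (card C))"
proof -
  have "\<forall>\<^sub>F n in sequentially. real n + 1 \<le> exp (real n / 50)" by real_asymp
  thus ?thesis
  proof (rule eventually_mono, intro ballI impI allI)
    fix n k C
    assume n: "real n + 1 \<le> exp (real n / 50)" and C: "C \<in> conj_classes n" "real (fixpts n C) \<le> real n / 4"
      and k: "real n / 2 < real k \<and> real k \<le> 5/8 * real n"
    let ?X = "\<Sum>(C1, C2) \<in> class_splittings n k C. real (card C1) * real (card C2)"
    let ?L = "2 powr (3/4 * real n) / (real n + 1)"
    have "?X * ?L \<le> ?X * real (n choose k)"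
      using binomial_ge_powr k by (intro mult_left_mono sum_nonneg) auto
    also have "\<dots> \<le> real (card C) * 2 powr (5/8 * real n)"
      using splitting_sum_mult_binomial_le_powr[OF C(1) _ C(2)] k by simp
    also have "\<dots> \<le> real (card C) * (exp (- (3/50) * real n) * ?L)"
      using poly_powr_le_exp_powr[OF n] by (intro mult_left_mono) (simp_all add: field_simps)
    finally have "?X * ?L \<le> (exp (- (3/50) * real n) * real (card C)) * ?L" by (simp only: ac_simps)
    moreover have "0 < ?L" by simp
    ultimately show "?X \<le> exp (- (3/50) * real n) * real (card C)" by (rule mult_right_le_imp_le)
  qed
qed

lemma splitting_sum_codim1_le:
  assumes "C \<in> conj_classes n" "1 \<le> n" "real (fixpts n C) \<le> \<delta> * real n"
  shows "(\<Sum>(C1, C2) \<in> class_splittings n (n - 1) C. real (card C1)) \<le> \<delta> * real (card C)"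
proof -
  let ?X = "\<Sum>(C1, C2) \<in> class_splittings n (n - 1) C. real (card C1) * real (card C2)"
  have "?X * real n \<le> real (card C) * real (fixpts n C)"
  proof -
    have "?X * real (n choose (n - 1)) \<le> real (card C) * real (fixpts n C)"
    proof (rule splitting_sum_mult_binomial_le[OF assms(1)])
      fix p assume "p \<in> C"
      note p = conj_classes_mem_fixpts[OF assms(1) this]
      show "real (card (invariant_subsets p {..<n} (n - 1))) \<le> real (fixpts n C)"
        using card_invariant_subsets_codim1_le[OF p(1) finite_lessThan] p(2) assms(2)
        by (simp add: lessThan_empty_iff)
    qed simp
    thus ?thesis using assms(2) by (simp add: binomial_symmetric[symmetric])
  qed
  also have "\<dots> \<le> (\<delta> * real (card C)) * real n"
    using mult_left_mono[OF assms(3), of "real (card C)"] by (simp add: ac_simps)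
  finally have "?X \<le> \<delta> * real (card C)" using assms(2) by simp
  with splitting_sum_card_fst_le show ?thesis by (rule order_trans)
qed

lemma splitting_sum_codim2_le:
  assumes "C \<in> conj_classes n" "0 < \<delta>" "2 / \<delta>^2 + 2 \<le> real n" "real (fixpts n C) \<le> \<delta> * real n"
  shows "(\<Sum>(C1, C2) \<in> class_splittings n (n - 2) C. real (card C1)) \<le> 2 * \<delta>^2 * real (card C)"
proof -
  let ?X = "\<Sum>(C1, C2) \<in> class_splittings n (n - 2) C. real (card C1) * real (card C2)"
  let ?f = "real (fixpts n C)" let ?m = "real n * (real n - 1) / 2"
  have "0 \<le> 2 / \<delta>^2" by simp
  hence n2: "2 \<le> n" using assms(3) by linarith
  have "?X * ?m \<le> real (card C) * (?f^2 / 2 + real n)"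
  proof -
    have "?X * real (n choose (n - 2)) \<le> real (card C) * (?f^2 / 2 + real n)"
    proof (rule splitting_sum_mult_binomial_le[OF assms(1)])
      fix p assume "p \<in> C"
      note p = conj_classes_mem_fixpts[OF assms(1) this]
      have "card (invariant_subsets p {..<n} (n - 2)) \<le> (fixpts n C choose 2) + n"
        using card_invariant_subsets_codim2_le[OF p(1)] p(2) n2 by simp
      hence "real (card (invariant_subsets p {..<n} (n - 2))) \<le> real (fixpts n C choose 2) + real n"
        by (metis of_nat_add of_nat_le_iff)
      moreover have "real (fixpts n C choose 2) \<le> ?f^2 / 2"
        unfolding real_choose_two by (simp add: power2_eq_square field_simps)
      ultimately show "real (card (invariant_subsets p {..<n} (n - 2))) \<le> ?f^2 / 2 + real n" by linarith
    qed simp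
    moreover have "real (n choose (n - 2)) = ?m"
      using n2 by (simp add: binomial_symmetric[symmetric] real_choose_two)
    ultimately show ?thesis by simp
  qed
  also have "\<dots> \<le> real (card C) * (2 * \<delta>^2 * ?m)"
  proof (rule mult_left_mono)
    have "?f^2 \<le> \<delta>^2 * real n ^ 2" using assms(4) by (metis of_nat_0_le_iff power_mono power_mult_distrib)
    moreover have "2 \<le> \<delta>^2 * (real n - 2)" using assms(2,3) by (simp add: field_simps)
    hence "2 * real n \<le> \<delta>^2 * (real n - 2) * real n" by (intro mult_right_mono) simp_all
    ultimately show "?f^2 / 2 + real n \<le> 2 * \<delta>^2 * ?m" by (simp add: algebra_simps power2_eq_square)
  qed simp
  finally have "?X \<le> 2 * \<delta>^2 * real (card C)" using n2 by (simp add: ac_simps)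
  with splitting_sum_card_fst_le show ?thesis by (rule order_trans)
qed

theorem lemma5p6:
  fixes \<delta> :: real
  assumes "0 < \<delta>" and "\<delta> \<le> 1/4"
  shows "\<exists>N::nat. \<forall>n\<ge>N. \<forall>C\<in>conj_classes n. real (fixpts n C) \<le> \<delta> * real n \<longrightarrow>
     (\<forall>k::nat. real n / 2 < real k \<and> real k \<le> 5/8 * real n \<longrightarrow>
        (\<Sum>(C1, C2) \<in> {(C1, C2). C1 \<in> conj_classes k \<and> C2 \<in> conj_classes (n - k) \<and> class_prod_eq n k C C1 C2}.
            real (card C1) * real (card C2)) \<le> exp (- (3/50) * real n) * real (card C))
   \<and> (\<Sum>(C1, C2) \<in> {(C1, C2). C1 \<in> conj_classes (n - 1) \<and> C2 \<in> conj_classes 1 \<and> class_prod_eq n (n - 1) C C1 C2}.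
            real (card C1)) \<le> \<delta> * real (card C)
   \<and> (\<Sum>(C1, C2) \<in> {(C1, C2). C1 \<in> conj_classes (n - 2) \<and> C2 \<in> conj_classes 2 \<and> class_prod_eq n (n - 2) C C1 C2}.
            real (card C1)) \<le> 2 * \<delta>^2 * real (card C)"
proof -
  obtain N0 where N0: "\<And>n. n \<ge> N0 \<Longrightarrow> \<forall>C \<in> conj_classes n. real (fixpts n C) \<le> real n / 4 \<longrightarrow>
     (\<forall>k. real n / 2 < real k \<and> real k \<le> 5/8 * real n \<longrightarrow>
        (\<Sum>(C1, C2) \<in> class_splittings n k C. real (card C1) * real (card C2)) \<le> exp (- (3/50) * real n) * real (card C))"
    using eventually_splitting_sum_le_exp unfolding eventually_sequentially by blast
  show ?thesis
  proof (intro exI[of _ "max N0 (nat \<lceil>2 / \<delta>^2 + 2\<rceil>)"] allI impI ballI conjI)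
    fix n C assume n: "max N0 (nat \<lceil>2 / \<delta>^2 + 2\<rceil>) \<le> n" and C: "C \<in> conj_classes n"
      and f: "real (fixpts n C) \<le> \<delta> * real n"
    have n_large: "2 / \<delta>^2 + 2 \<le> real n" using n by linarith
    moreover have "0 \<le> 2 / \<delta>^2" by simp
    ultimately have "2 \<le> n" by linarith
    hence n1: "1 \<le> n" and diffs: "n - (n - 1) = 1" "n - (n - 2) = 2" by auto
    have quarter: "real (fixpts n C) \<le> real n / 4" using f mult_right_mono[OF assms(2), of "real n"] by simp
    show "(\<Sum>(C1, C2) \<in> {(C1, C2). C1 \<in> conj_classes k \<and> C2 \<in> conj_classes (n - k) \<and> class_prod_eq n k C C1 C2}.
            real (card C1) * real (card C2)) \<le> exp (- (3/50) * real n) * real (card C)"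
      if "real n / 2 < real k \<and> real k \<le> 5/8 * real n" for k
      using N0[of n] n C quarter that unfolding class_splittings_def by simp
    show "(\<Sum>(C1, C2) \<in> {(C1, C2). C1 \<in> conj_classes (n - 1) \<and> C2 \<in> conj_classes 1 \<and> class_prod_eq n (n - 1) C C1 C2}.
            real (card C1)) \<le> \<delta> * real (card C)"
      using splitting_sum_codim1_le[OF C n1 f] diffs unfolding class_splittings_def by simp
    show "(\<Sum>(C1, C2) \<in> {(C1, C2). C1 \<in> conj_classes (n - 2) \<and> C2 \<in> conj_classes 2 \<and> class_prod_eq n (n - 2) C C1 C2}.
            real (card C1)) \<le> 2 * \<delta>^2 * real (card C)"
      using splitting_sum_codim2_le[OF C assms(1) n_large f] diffs unfolding class_splittings_def by simp
  qed
qed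

end
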